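(* Let $\sigma>0$, let $g_\sigma(x,y)=e^{-\|x-y\|^2/(2\sigma^2)}$ be the Gaussian kernel on $\mathbb{R}^N$ and $\mathfrak{g}_\sigma$ the distance it induces. Let $\eta$ be a probability law on $\mathbb{R}^N$ and fix an integer $Q\ge1$. 1. For every $\alpha\in\mathcal{P}_Q$, the problem $\inf_{X=(x_q)_{q=1}^Q\in\mathbb{R}^{N\times Q}}\mathfrak{g}_\sigma(\delta_{\alpha,X},\eta)^2$ admits at least one solution $X^\star\in\mathbb{R}^{N\times Q}$. 2. The problem $\inf_{X\in\mathbb{R}^{N\times Q},\ \alpha\in\mathcal{P}_Q}\mathfrak{g}_\sigma(\delta_{\alpha,X},\eta)^2$ admits at least one solution $X^\dagger\in\mathbb{R}^{N\times Q}$, $\alpha^\dagger\in\mathcal{P}_Q$.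
   Context: $\mathcal{P}_Q=\{\alpha\in\mathbb{R}^Q:\alpha_q\ge0,\ \sum_q\alpha_q=1\}$; for $X=(x_q)_{q=1}^Q$, $\delta_{\alpha,X}=\sum_q\alpha_q\delta_{x_q}$. The distance $\mathfrak{g}_\sigma$ is the one of the Hilbert space embedding of measures with inner product $\langle\delta_x,\delta_y\rangle=g_\sigma(x,y)$, i.e. $\mathfrak{g}_\sigma(\mu,\nu)^2=\int\int g_\sigma(x,y)(\mu-\nu)(dx)(\mu-\nu)(dy)$ for finite measures $\mu,\nu$. *)

theory Defs
  imports "HOL-Probability.Probability"
begin

definition gauss_kernel :: "real \<Rightarrow> 'a::real_normed_vector \<Rightarrow> 'a \<Rightarrow> real" where
  "gauss_kernel \<sigma> x y = exp (- (norm (x - y))\<^sup>2 / (2 * \<sigma>\<^sup>2))"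

text \<open>Squared kernel distance between finite measures mu, nu:
  the double integral of the kernel against (mu - nu) x (mu - nu), expanded by bilinearity.\<close>
definition gdist2 :: "real \<Rightarrow> 'a::real_normed_vector measure \<Rightarrow> 'a measure \<Rightarrow> real" where
  "gdist2 \<sigma> \<mu> \<nu> =
     (\<integral>x. (\<integral>y. gauss_kernel \<sigma> x y \<partial>\<mu>) \<partial>\<mu>)
     - 2 * (\<integral>x. (\<integral>y. gauss_kernel \<sigma> x y \<partial>\<nu>) \<partial>\<mu>)
     + (\<integral>x. (\<integral>y. gauss_kernel \<sigma> x y \<partial>\<nu>) \<partial>\<nu>)"

definition prob_simplex :: "nat \<Rightarrow> (nat \<Rightarrow> real) set" where
  "prob_simplex Q = {\<alpha>. (\<forall>q<Q. 0 \<le> \<alpha> q) \<and> (\<Sum>q<Q. \<alpha> q) = 1}"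

text \<open>The discrete measure sum_q alpha_q delta_{x_q} on the Borel sets: push-forward of the
  weighted counting measure on {0..Q-1} under q |-> x_q.\<close>
definition dirac_comb :: "nat \<Rightarrow> (nat \<Rightarrow> real) \<Rightarrow> (nat \<Rightarrow> 'a::topological_space) \<Rightarrow> 'a measure" where
  "dirac_comb Q \<alpha> X = distr (point_measure {..<Q} (\<lambda>q. ennreal (\<alpha> q))) borel X"

end

theory Submission
  imports Defs
begin

text \<open>
  For weights \<open>\<beta>\<close> and points \<open>X\<close> the squared distance is the energy
  \<open>\<Sum>\<^sub>p \<Sum>\<^sub>q \<beta>\<^sub>p \<beta>\<^sub>q k(X\<^sub>p, X\<^sub>q) - 2 \<Sum>\<^sub>q \<beta>\<^sub>q h(X\<^sub>q) + const\<close>, where \<open>h = \<integral> k(\<cdot>, y) d\<eta>(y)\<close>.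
  Along a minimising sequence pass to a subsequence on which the weights converge and every
  point either converges or escapes to infinity. Escaping points decouple from everything else,
  so the limit of the energy is at least the energy of the converging points plus the squared
  weights of the escaping ones (as \<open>k(x, x) = 1\<close>). This relaxed value is attained or beaten:
  if some escaping weight is positive, the converging points carry total weight \<open>< 1\<close>, and
  since \<open>h\<close> and each \<open>k(x, \<cdot>)\<close> have the same Lebesgue integral there is a \<open>y\<close> where \<open>h\<close>
  exceeds the kernel combination of the converging points. Putting one escaping point at
  \<open>y\<close> and sending the others to infinity in distinct directions lowers the energy strictly.
\<close>

lemma gauss_kernel_nonneg [simp]: "0 \<le> gauss_kernel s x y"
  by (simp add: gauss_kernel_def)

lemma gauss_kernel_le_1: "gauss_kernel s x y \<le> 1"
  by (simp add: gauss_kernel_def)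

lemma gauss_kernel_same [simp]: "gauss_kernel s x x = 1"
  by (simp add: gauss_kernel_def)

lemma gauss_kernel_commute: "gauss_kernel s x y = gauss_kernel s y x"
  by (simp add: gauss_kernel_def norm_minus_commute)

lemma borel_measurable_gauss_kernel [measurable (raw)]:
  fixes f g :: "'b \<Rightarrow> 'a::euclidean_space"
  assumes [measurable]: "f \<in> borel_measurable M" "g \<in> borel_measurable M"
  shows "(\<lambda>x. gauss_kernel s (f x) (g x)) \<in> borel_measurable M"
  unfolding gauss_kernel_def by measurable

lemma tendsto_gauss_kernel [tendsto_intros]:
  "(f \<longlongrightarrow> a) F \<Longrightarrow> (g \<longlongrightarrow> b) F \<Longrightarrow>
    ((\<lambda>n. gauss_kernel s (f n) (g n)) \<longlongrightarrow> gauss_kernel s a b) F"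
  unfolding gauss_kernel_def divide_inverse by (intro tendsto_intros)

lemma gauss_kernel_tendsto_0:
  assumes "s > 0" and "filterlim (\<lambda>n. norm (f n - g n)) at_top F"
  shows "((\<lambda>n. gauss_kernel s (f n) (g n)) \<longlongrightarrow> 0) F"
proof -
  have "filterlim (\<lambda>n. (norm (f n - g n))\<^sup>2 / (2 * s\<^sup>2)) at_top F"
    using filterlim_tendsto_pos_mult_at_top[OF tendsto_const _ filterlim_pow_at_top[OF _ assms(2)],
        of "1 / (2 * s\<^sup>2)" 2] assms(1)
    by simp
  then have "filterlim (\<lambda>n. - (norm (f n - g n))\<^sup>2 / (2 * s\<^sup>2)) at_bot F"
    by (simp add: filterlim_uminus_at_bot)
  then show ?thesis
    unfolding gauss_kernel_def by (rule filterlim_compose[OF exp_at_bot])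
qed

lemma filterlim_norm_diff_at_top:
  fixes f g :: "'b \<Rightarrow> 'a::real_normed_vector"
  assumes "filterlim (\<lambda>n. norm (f n)) at_top F" and "(g \<longlongrightarrow> b) F"
  shows "filterlim (\<lambda>n. norm (f n - g n)) at_top F"
proof -
  have "filterlim (\<lambda>n. - norm (g n) + norm (f n)) at_top F"
    by (rule filterlim_tendsto_add_at_top[OF tendsto_minus[OF tendsto_norm[OF assms(2)]] assms(1)])
  then show ?thesis
    by (rule filterlim_at_top_mono) (auto intro: always_eventually norm_triangle_ineq2)
qed

lemma nn_integral_gauss_kernel:
  fixes x :: "'a::euclidean_space"
  assumes "s > 0"
  shows "(\<integral>\<^sup>+y. gauss_kernel s x y \<partial>lborel) = ennreal (sqrt (2 * pi * s\<^sup>2) ^ DIM('a))"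
proof -
  have gauss_1d: "(\<integral>\<^sup>+t. exp (- t\<^sup>2 / (2 * s\<^sup>2)) \<partial>lborel) = ennreal (sqrt (2 * pi * s\<^sup>2))"
  proof -
    have "(\<lambda>t. ennreal (exp (- t\<^sup>2 / (2 * s\<^sup>2))))
        = (\<lambda>t. ennreal (sqrt (2 * pi * s\<^sup>2)) * ennreal (normal_density 0 s t))"
      using assms by (auto simp: normal_density_def ennreal_mult[symmetric] intro!: ext)
    then have "(\<integral>\<^sup>+t. exp (- t\<^sup>2 / (2 * s\<^sup>2)) \<partial>lborel)
        = ennreal (sqrt (2 * pi * s\<^sup>2)) * (\<integral>\<^sup>+t. normal_density 0 s t \<partial>lborel)"
      by (simp add: nn_integral_cmult)
    also have "(\<integral>\<^sup>+t. normal_density 0 s t \<partial>lborel) = 1"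
      using assms by (subst nn_integral_eq_integral)
        (auto simp: integrable_normal_density integral_normal_density)
    finally show ?thesis by simp
  qed
  have product: "gauss_kernel s 0 y = (\<Prod>b\<in>Basis. exp (- (y \<bullet> b)\<^sup>2 / (2 * s\<^sup>2)))" for y :: 'a
  proof -
    have "(norm y)\<^sup>2 = (\<Sum>b\<in>Basis. (y \<bullet> b) * (y \<bullet> b))"
      unfolding power2_norm_eq_inner by (rule euclidean_inner)
    then have "(norm y)\<^sup>2 = (\<Sum>b\<in>Basis. (y \<bullet> b)\<^sup>2)"
      by (simp add: power2_eq_square)
    then have "- (norm (0 - y))\<^sup>2 / (2 * s\<^sup>2) = (\<Sum>b\<in>Basis. - (y \<bullet> b)\<^sup>2 / (2 * s\<^sup>2))"
      by (simp add: sum_divide_distrib sum_negf)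
    then show ?thesis
      unfolding gauss_kernel_def by (simp add: exp_sum)
  qed
  have "(\<integral>\<^sup>+y. gauss_kernel s x y \<partial>lborel) = (\<integral>\<^sup>+y. gauss_kernel s x y \<partial>distr lborel borel ((+) x))"
    by (simp add: lborel_distr_plus)
  also have "\<dots> = (\<integral>\<^sup>+y. gauss_kernel s 0 y \<partial>(lborel :: 'a measure))"
    by (subst nn_integral_distr) (auto simp: gauss_kernel_def)
  also have "\<dots> = (\<integral>\<^sup>+y. (\<Prod>b\<in>Basis. ennreal (exp (- (y \<bullet> b)\<^sup>2 / (2 * s\<^sup>2)))) \<partial>(lborel :: 'a measure))"
    unfolding product by (simp add: prod_ennreal)
  also have "\<dots> = (\<Prod>b\<in>(Basis::'a set). (\<integral>\<^sup>+t. exp (- t\<^sup>2 / (2 * s\<^sup>2)) \<partial>lborel))"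
    by (rule nn_integral_lborel_prod) auto
  also have "\<dots> = ennreal (sqrt (2 * pi * s\<^sup>2) ^ DIM('a))"
    unfolding gauss_1d by (simp add: ennreal_power)
  finally show ?thesis .
qed

lemma integral_dirac_comb:
  fixes f :: "'a::topological_space \<Rightarrow> real"
  assumes "f \<in> borel_measurable borel" and "\<forall>q<Q. 0 \<le> \<alpha> q"
  shows "(\<integral>x. f x \<partial>dirac_comb Q \<alpha> X) = (\<Sum>q<Q. \<alpha> q * f (X q))"
proof -
  have "X \<in> measurable (point_measure {..<Q} (\<lambda>q. ennreal (\<alpha> q))) borel"
    by (simp add: point_measure_def)
  then show ?thesis
    unfolding dirac_comb_def using assms
    by (subst integral_distr, simp_all) (subst lebesgue_integral_point_measure_finite, auto)
qed

lemma subseq_tendsto_or_norm_at_top: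
  fixes f :: "nat \<Rightarrow> 'a::{heine_borel,real_normed_vector}"
  shows "\<exists>r. strict_mono r \<and>
    ((\<exists>l. (f \<circ> r) \<longlonglongrightarrow> l) \<or> filterlim (\<lambda>n. norm (f (r n))) at_top sequentially)"
proof -
  obtain r where r: "strict_mono r" "monoseq (\<lambda>n. norm (f (r n)))"
    using seq_monosub[of "\<lambda>n. norm (f n)"] by blast
  show ?thesis
  proof (cases "bounded (range (f \<circ> r))")
    case True
    then obtain l r' where "strict_mono r'" "(f \<circ> r \<circ> r') \<longlonglongrightarrow> l"
      using bounded_imp_convergent_subsequence by blast
    then show ?thesis
      using strict_mono_o[OF r(1)] by (metis comp_assoc)
  next
    case False
    then have unbounded: "\<exists>n. M < norm (f (r n))" for M
      by (auto simp: bounded_iff not_le)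
    have "\<not> decseq (\<lambda>n. norm (f (r n)))"
      using unbounded[of "norm (f (r 0))"] by (metis decseq_def le0 not_le)
    then have "incseq (\<lambda>n. norm (f (r n)))"
      using r(2) by (auto simp: monoseq_iff)
    then have "filterlim (\<lambda>n. norm (f (r n))) at_top sequentially"
      unfolding filterlim_at_top eventually_sequentially
    proof (intro allI)
      fix M
      obtain N where "M < norm (f (r N))"
        using unbounded by blast
      with \<open>incseq _\<close> have "\<forall>n\<ge>N. M \<le> norm (f (r n))"
        by (meson incseq_def less_imp_le order.trans)
      then show "\<exists>N. \<forall>n\<ge>N. M \<le> norm (f (r n))" ..
    qed
    then show ?thesis
      using r(1) by blast
  qed
qed

lemma finite_family_subseq_tendsto_or_norm_at_top:
  fixes f :: "nat \<Rightarrow> 'i \<Rightarrow> 'a::{heine_borel,real_normed_vector}"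
  assumes "finite S"
  shows "\<exists>r B x. strict_mono r \<and> B \<subseteq> S \<and> (\<forall>q\<in>B. (\<lambda>n. f (r n) q) \<longlonglongrightarrow> x q) \<and>
    (\<forall>q\<in>S - B. filterlim (\<lambda>n. norm (f (r n) q)) at_top sequentially)"
  using assms
proof (induction S rule: finite_induct)
  case empty
  show ?case
    using strict_mono_id by blast
next
  case (insert q S)
  then obtain r B x where r: "strict_mono r" "B \<subseteq> S" "\<forall>p\<in>B. (\<lambda>n. f (r n) p) \<longlonglongrightarrow> x p"
      "\<forall>p\<in>S - B. filterlim (\<lambda>n. norm (f (r n) p)) at_top sequentially"
    by blast
  obtain r' where r': "strict_mono r'"
      "(\<exists>l. ((\<lambda>n. f (r n) q) \<circ> r') \<longlonglongrightarrow> l) \<or> filterlim (\<lambda>n. norm (f (r (r' n)) q)) at_top sequentially"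
    using subseq_tendsto_or_norm_at_top[of "\<lambda>n. f (r n) q"] by blast
  have tendsto_r': "(\<lambda>n. f (r (r' n)) p) \<longlonglongrightarrow> x p" if "p \<in> B" for p
    using LIMSEQ_subseq_LIMSEQ[OF _ r'(1)] r(3) that by (auto simp: o_def)
  have at_top_r': "filterlim (\<lambda>n. norm (f (r (r' n)) p)) at_top sequentially" if "p \<in> S - B" for p
    using filterlim_compose[OF _ filterlim_subseq[OF r'(1)]] r(4) that by auto
  have mono: "strict_mono (\<lambda>n. r (r' n))"
    using strict_mono_o[OF r(1) r'(1)] by (simp add: o_def)
  from r'(2) show ?case
  proof
    assume "\<exists>l. ((\<lambda>n. f (r n) q) \<circ> r') \<longlonglongrightarrow> l"
    then obtain l where "(\<lambda>n. f (r (r' n)) q) \<longlonglongrightarrow> l"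
      by (auto simp: o_def)
    then show ?thesis
      using mono r(2) tendsto_r' at_top_r' insert.hyps(2)
      by (intro exI[of _ "\<lambda>n. r (r' n)"] exI[of _ "insert q B"] exI[of _ "x(q := l)"]) auto
  next
    assume "filterlim (\<lambda>n. norm (f (r (r' n)) q)) at_top sequentially"
    then show ?thesis
      using mono r(2) tendsto_r' at_top_r'
      by (intro exI[of _ "\<lambda>n. r (r' n)"] exI[of _ B] exI[of _ x]) auto
  qed
qed

lemma prob_simplex_subseq_tendsto:
  fixes \<beta>s :: "nat \<Rightarrow> nat \<Rightarrow> real"
  assumes "\<And>n. \<beta>s n \<in> prob_simplex Q"
  shows "\<exists>r \<beta>. strict_mono r \<and> \<beta> \<in> prob_simplex Q \<and> (\<forall>q<Q. (\<lambda>n. \<beta>s (r n) q) \<longlonglongrightarrow> \<beta> q)"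
proof -
  have bounded: "\<bar>\<beta>s n q\<bar> \<le> 1" if "q < Q" for n q
    using assms[of n] member_le_sum[of q "{..<Q}" "\<beta>s n"] that by (auto simp: prob_simplex_def)
  obtain r B \<beta> where r: "strict_mono r" "B \<subseteq> {..<Q}" "\<forall>q\<in>B. (\<lambda>n. \<beta>s (r n) q) \<longlonglongrightarrow> \<beta> q"
      "\<forall>q\<in>{..<Q} - B. filterlim (\<lambda>n. norm (\<beta>s (r n) q)) at_top sequentially"
    using finite_family_subseq_tendsto_or_norm_at_top[of "{..<Q}" \<beta>s] by blast
  have "B = {..<Q}"
  proof (rule ccontr)
    assume "B \<noteq> {..<Q}"
    then obtain q where q: "q < Q" "q \<in> {..<Q} - B"
      using r(2) by blast
    then have "\<forall>\<^sub>F n in sequentially. 2 \<le> norm (\<beta>s (r n) q)"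
      using r(4) by (auto simp: filterlim_at_top)
    then obtain N where "\<forall>n\<ge>N. 2 \<le> norm (\<beta>s (r n) q)"
      by (auto simp: eventually_sequentially)
    then show False
      using bounded[OF q(1), of "r N"] by auto
  qed
  then have tendsto: "\<forall>q<Q. (\<lambda>n. \<beta>s (r n) q) \<longlonglongrightarrow> \<beta> q"
    using r(3) by auto
  have "0 \<le> \<beta> q" if "q < Q" for q
    using tendsto that assms by (intro LIMSEQ_le_const[of "\<lambda>n. \<beta>s (r n) q"]) (auto simp: prob_simplex_def)
  moreover have "(\<lambda>n. \<Sum>q<Q. \<beta>s (r n) q) \<longlonglongrightarrow> (\<Sum>q<Q. \<beta> q)"
    using tendsto by (intro tendsto_sum) auto
  then have "(\<Sum>q<Q. \<beta> q) = 1"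
    using assms by (simp add: prob_simplex_def LIMSEQ_const_iff)
  ultimately show ?thesis
    using r(1) tendsto by (auto simp: prob_simplex_def)
qed

lemma exists_pairwise_norm_diff_at_top:
  fixes E :: "'i set"
  assumes "finite E"
  shows "\<exists>Z :: nat \<Rightarrow> 'i \<Rightarrow> 'a::euclidean_space. \<forall>p\<in>E.
    filterlim (\<lambda>n. norm (Z n p)) at_top sequentially \<and>
    (\<forall>q\<in>E. p \<noteq> q \<longrightarrow> filterlim (\<lambda>n. norm (Z n p - Z n q)) at_top sequentially)"
proof -
  obtain f :: "'i \<Rightarrow> nat" where f: "inj_on f E"
    using finite_imp_inj_to_nat_seg[OF assms] by blast
  obtain e :: 'a where e: "norm e = 1"
    using norm_Basis nonempty_Basis by blast
  have linear_at_top: "filterlim (\<lambda>n. c * real n) at_top sequentially" if "0 < c" for c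
    by (rule filterlim_tendsto_pos_mult_at_top[OF tendsto_const that filterlim_real_sequentially])
  define Z where "Z n p = (real (Suc (f p)) * real n) *\<^sub>R e" for n p
  have "norm (Z n p) = real (Suc (f p)) * real n" for n p
    using e by (simp add: Z_def)
  moreover have "norm (Z n p - Z n q) = \<bar>real (Suc (f p)) - real (Suc (f q))\<bar> * real n" for n p q
    using e by (simp add: Z_def abs_mult flip: scaleR_diff_left left_diff_distrib)
  moreover have "0 < \<bar>real (Suc (f p)) - real (Suc (f q))\<bar>" if "p \<in> E" "q \<in> E" "p \<noteq> q" for p q
    using f that by (auto dest: inj_onD)
  ultimately show ?thesis
    using linear_at_top by (intro exI[of _ Z]) auto
qed

locale gauss_mmd =
  fixes \<sigma> :: real and \<eta> :: "'a::euclidean_space measure"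
  assumes sigma_pos: "\<sigma> > 0" and prob_space_eta: "prob_space \<eta>" and sets_eta: "sets \<eta> = sets borel"
begin

definition potential :: "'a \<Rightarrow> real" where
  "potential x = (\<integral>y. gauss_kernel \<sigma> x y \<partial>\<eta>)"

definition self_energy :: real where
  "self_energy = (\<integral>x. potential x \<partial>\<eta>)"

definition interaction :: "'i set \<Rightarrow> ('i \<Rightarrow> real) \<Rightarrow> ('i \<Rightarrow> 'a) \<Rightarrow> real" where
  "interaction S \<beta> X = (\<Sum>p\<in>S. \<Sum>q\<in>S. \<beta> p * \<beta> q * gauss_kernel \<sigma> (X p) (X q))"

definition energy :: "'i set \<Rightarrow> ('i \<Rightarrow> real) \<Rightarrow> ('i \<Rightarrow> 'a) \<Rightarrow> real" where
  "energy S \<beta> X = interaction S \<beta> X - 2 * (\<Sum>q\<in>S. \<beta> q * potential (X q)) + self_energy"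

lemma borel_measurable_eta_iff: "f \<in> borel_measurable \<eta> \<longleftrightarrow> f \<in> borel_measurable borel"
  by (metis measurable_cong_sets sets_eta)

lemma potential_dominated_convergence:
  assumes "\<And>y. (\<lambda>n. gauss_kernel \<sigma> (X n) y) \<longlonglongrightarrow> g y"
  shows "(\<lambda>n. potential (X n)) \<longlonglongrightarrow> (\<integral>y. g y \<partial>\<eta>)"
proof -
  interpret prob_space \<eta>
    by (rule prob_space_eta)
  have "g \<in> borel_measurable borel"
    by (rule borel_measurable_LIMSEQ_metric[OF _ assms]) measurable
  then show ?thesis
    unfolding potential_def using assms gauss_kernel_le_1
    by (intro integral_dominated_convergence[where w = "\<lambda>_. 1"])
      (auto simp: borel_measurable_eta_iff abs_le_iff intro!: AE_I2)
qed

lemma integrable_gauss_kernel: "integrable \<eta> (\<lambda>y. gauss_kernel \<sigma> x y)"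
proof -
  interpret prob_space \<eta>
    by (rule prob_space_eta)
  show ?thesis
    using gauss_kernel_le_1
    by (intro integrable_const_bound[where B = 1]) (auto simp: borel_measurable_eta_iff abs_le_iff intro!: AE_I2)
qed

lemma potential_le_1: "potential x \<le> 1"
proof -
  interpret prob_space \<eta>
    by (rule prob_space_eta)
  have "potential x \<le> (\<integral>y. 1 \<partial>\<eta>)"
    unfolding potential_def by (rule integral_mono) (auto simp: integrable_gauss_kernel gauss_kernel_le_1)
  then show ?thesis
    by (simp add: prob_space)
qed

lemma continuous_potential: "continuous_on UNIV potential"
proof -
  have "(\<lambda>n. potential (X n)) \<longlonglongrightarrow> potential a" if "X \<longlonglongrightarrow> a" for X a
    unfolding potential_def[of a]
    by (rule potential_dominated_convergence) (intro tendsto_intros that)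
  then show ?thesis
    by (auto simp: continuous_on_sequentially o_def)
qed

lemma tendsto_potential [tendsto_intros]:
  "(f \<longlongrightarrow> a) F \<Longrightarrow> ((\<lambda>n. potential (f n)) \<longlongrightarrow> potential a) F"
  using continuous_potential by (auto intro: isCont_tendsto_compose simp: continuous_on_eq_continuous_at)

lemma borel_measurable_potential [measurable]: "potential \<in> borel_measurable borel"
  using continuous_potential by (rule borel_measurable_continuous_onI)

lemma potential_tendsto_0:
  assumes "filterlim (\<lambda>n. norm (X n)) at_top sequentially"
  shows "(\<lambda>n. potential (X n)) \<longlonglongrightarrow> 0"
  using potential_dominated_convergence[of X "\<lambda>_. 0"]
    gauss_kernel_tendsto_0[OF sigma_pos filterlim_norm_diff_at_top[OF assms tendsto_const]]
  by simp

lemma nn_integral_potential: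
  fixes z :: 'a
  shows "(\<integral>\<^sup>+x. potential x \<partial>lborel) = (\<integral>\<^sup>+y. gauss_kernel \<sigma> z y \<partial>lborel)"
proof -
  interpret prob_space \<eta>
    by (rule prob_space_eta)
  interpret pair_sigma_finite \<eta> "lborel :: 'a measure"
    by (intro pair_sigma_finite.intro prob_space_imp_sigma_finite prob_space_eta sigma_finite_lborel)
  have "(\<lambda>(y, x). ennreal (gauss_kernel \<sigma> x y))
      \<in> borel_measurable ((borel :: 'a measure) \<Otimes>\<^sub>M (borel :: 'a measure))"
    by measurable
  moreover have "sets (\<eta> \<Otimes>\<^sub>M lborel) = sets (borel \<Otimes>\<^sub>M (borel :: 'a measure))"
    by (rule sets_pair_measure_cong) (auto simp: sets_eta)
  ultimately have "(\<lambda>(y, x). ennreal (gauss_kernel \<sigma> x y)) \<in> borel_measurable (\<eta> \<Otimes>\<^sub>M lborel)"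
    by (metis measurable_cong_sets)
  have potential_eq: "ennreal (potential x) = (\<integral>\<^sup>+y. gauss_kernel \<sigma> x y \<partial>\<eta>)" for x
    unfolding potential_def
    by (subst nn_integral_eq_integral) (auto simp: integrable_gauss_kernel)
  have "(\<integral>\<^sup>+x. potential x \<partial>lborel) = (\<integral>\<^sup>+x. (\<integral>\<^sup>+y. gauss_kernel \<sigma> x y \<partial>\<eta>) \<partial>lborel)"
    by (simp add: potential_eq)
  also have "\<dots> = (\<integral>\<^sup>+y. (\<integral>\<^sup>+x. gauss_kernel \<sigma> x y \<partial>lborel) \<partial>\<eta>)"
    by (rule Fubini') fact
  also have "\<dots> = (\<integral>\<^sup>+y. ennreal (sqrt (2 * pi * \<sigma>\<^sup>2) ^ DIM('a)) \<partial>\<eta>)"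
    by (subst gauss_kernel_commute) (simp add: nn_integral_gauss_kernel[OF sigma_pos])
  also have "\<dots> = (\<integral>\<^sup>+y. gauss_kernel \<sigma> z y \<partial>lborel)"
    by (simp add: nn_integral_gauss_kernel[OF sigma_pos] emeasure_space_1)
  finally show ?thesis .
qed

lemma exists_kernel_combination_less_potential:
  assumes "finite B" and "\<And>p. p \<in> B \<Longrightarrow> 0 \<le> b p" and "(\<Sum>p\<in>B. b p) < 1"
  shows "\<exists>y. (\<Sum>p\<in>B. b p * gauss_kernel \<sigma> (x p) y) < potential y"
proof (rule ccontr)
  assume "\<not> ?thesis"
  then have le: "potential y \<le> (\<Sum>p\<in>B. b p * gauss_kernel \<sigma> (x p) y)" for y
    by (simp add: not_less)
  define c where "c = sqrt (2 * pi * \<sigma>\<^sup>2) ^ DIM('a)"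
  have c_pos: "0 < c"
    using sigma_pos by (simp add: c_def)
  have mass: "(\<integral>\<^sup>+y. gauss_kernel \<sigma> z y \<partial>lborel) = ennreal c" for z :: 'a
    unfolding c_def by (rule nn_integral_gauss_kernel[OF sigma_pos])
  have "ennreal c = (\<integral>\<^sup>+y. potential y \<partial>lborel)"
    by (simp add: nn_integral_potential[of 0] mass)
  also have "\<dots> \<le> (\<integral>\<^sup>+y. ennreal (\<Sum>p\<in>B. b p * gauss_kernel \<sigma> (x p) y) \<partial>lborel)"
    by (intro nn_integral_mono) (simp add: le ennreal_leI)
  also have "\<dots> = (\<integral>\<^sup>+y. (\<Sum>p\<in>B. ennreal (b p) * gauss_kernel \<sigma> (x p) y) \<partial>lborel)"
    using assms(2) by (simp add: sum_ennreal[symmetric] ennreal_mult)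
  also have "\<dots> = (\<Sum>p\<in>B. ennreal (b p) * ennreal c)"
    by (subst nn_integral_sum) (auto simp: nn_integral_cmult mass)
  also have "\<dots> = ennreal ((\<Sum>p\<in>B. b p) * c)"
    using assms(2) c_pos by (simp add: sum_ennreal[symmetric] ennreal_mult sum_distrib_right)
  finally have "c \<le> (\<Sum>p\<in>B. b p) * c"
    using c_pos by (simp add: ennreal_le_iff2)
  then show False
    using c_pos assms(3) by (simp add: mult_le_cancel_right1)
qed

lemma gdist2_dirac_comb_eq_energy:
  assumes "\<forall>q<Q. 0 \<le> \<beta> q"
  shows "gdist2 \<sigma> (dirac_comb Q \<beta> X) \<eta> = energy {..<Q} \<beta> X"
proof -
  have inner: "(\<integral>y. gauss_kernel \<sigma> x y \<partial>dirac_comb Q \<beta> X) = (\<Sum>q<Q. \<beta> q * gauss_kernel \<sigma> x (X q))" for x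
    using assms by (simp add: integral_dirac_comb)
  show ?thesis
    unfolding gdist2_def inner potential_def[symmetric]
    using assms
    by (simp add: integral_dirac_comb energy_def interaction_def self_energy_def sum_distrib_left mult.assoc)
qed

lemma energy_cong: "(\<And>q. q \<in> S \<Longrightarrow> X q = Y q) \<Longrightarrow> energy S \<beta> X = energy S \<beta> Y"
  by (simp add: energy_def interaction_def)

lemma energy_split:
  assumes "finite S" and "B \<subseteq> S"
  shows "energy S \<beta> X = energy B \<beta> X + interaction (S - B) \<beta> X
    + 2 * (\<Sum>p\<in>B. \<Sum>q\<in>S - B. \<beta> p * \<beta> q * gauss_kernel \<sigma> (X p) (X q))
    - 2 * (\<Sum>q\<in>S - B. \<beta> q * potential (X q))"
proof -
  define k where "k p q = \<beta> p * \<beta> q * gauss_kernel \<sigma> (X p) (X q)" for p q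
  have k_commute: "k p q = k q p" for p q
    by (simp add: k_def gauss_kernel_commute mult_ac)
  have split: "sum g S = sum g B + sum g (S - B)" for g :: "_ \<Rightarrow> real"
    using assms by (metis add.commute sum.subset_diff)
  have "(\<Sum>p\<in>S. \<Sum>q\<in>S. k p q) = (\<Sum>p\<in>B. \<Sum>q\<in>B. k p q) + (\<Sum>p\<in>S - B. \<Sum>q\<in>S - B. k p q)
      + (\<Sum>p\<in>B. \<Sum>q\<in>S - B. k p q) + (\<Sum>p\<in>S - B. \<Sum>q\<in>B. k p q)"
    by (simp add: split sum.distrib)
  also have "(\<Sum>p\<in>S - B. \<Sum>q\<in>B. k p q) = (\<Sum>p\<in>B. \<Sum>q\<in>S - B. k p q)"
    by (subst sum.swap) (simp add: k_commute)
  finally show ?thesis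
    by (simp add: energy_def interaction_def k_def split[of "\<lambda>q. \<beta> q * potential (X q)"])
qed

lemma sum_squares_le_interaction:
  assumes "finite E" and "\<And>q. q \<in> E \<Longrightarrow> 0 \<le> \<beta> q"
  shows "(\<Sum>q\<in>E. (\<beta> q)\<^sup>2) \<le> interaction E \<beta> X"
  unfolding interaction_def
proof (rule sum_mono)
  fix p assume "p \<in> E"
  then have "\<beta> p * \<beta> p * gauss_kernel \<sigma> (X p) (X p) \<le> (\<Sum>q\<in>E. \<beta> p * \<beta> q * gauss_kernel \<sigma> (X p) (X q))"
    using assms by (intro member_le_sum) auto
  then show "(\<beta> p)\<^sup>2 \<le> (\<Sum>q\<in>E. \<beta> p * \<beta> q * gauss_kernel \<sigma> (X p) (X q))"
    by (simp add: power2_eq_square)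
qed

lemma interaction_tendsto_sum_squares:
  assumes "finite E"
    and "\<And>p q. p \<in> E \<Longrightarrow> q \<in> E \<Longrightarrow> p \<noteq> q \<Longrightarrow>
      filterlim (\<lambda>n. norm (X n p - X n q)) at_top sequentially"
  shows "(\<lambda>n. interaction E \<beta> (X n)) \<longlonglongrightarrow> (\<Sum>q\<in>E. (\<beta> q)\<^sup>2)"
proof -
  have "(\<lambda>n. \<beta> p * \<beta> q * gauss_kernel \<sigma> (X n p) (X n q)) \<longlonglongrightarrow> (if p = q then (\<beta> p)\<^sup>2 else 0)"
    if "p \<in> E" "q \<in> E" for p q
    using gauss_kernel_tendsto_0[OF sigma_pos assms(2)[OF that]]
    by (cases "p = q") (auto simp: power2_eq_square intro: tendsto_mult_right_zero)
  then have "(\<lambda>n. interaction E \<beta> (X n)) \<longlonglongrightarrow> (\<Sum>p\<in>E. \<Sum>q\<in>E. if p = q then (\<beta> p)\<^sup>2 else 0)"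
    unfolding interaction_def by (intro tendsto_sum) auto
  then show ?thesis
    using assms(1) by (simp add: sum.delta)
qed

lemma energy_tendsto_escape:
  assumes "finite S" and "B \<subseteq> S"
    and "\<And>q. q \<in> S \<Longrightarrow> (\<lambda>n. \<beta>s n q) \<longlonglongrightarrow> \<beta> q"
    and "\<And>q. q \<in> B \<Longrightarrow> (\<lambda>n. Xs n q) \<longlonglongrightarrow> x q"
    and "\<And>q. q \<in> S - B \<Longrightarrow> filterlim (\<lambda>n. norm (Xs n q)) at_top sequentially"
  shows "(\<lambda>n. energy S (\<beta>s n) (Xs n) - interaction (S - B) (\<beta>s n) (Xs n)) \<longlonglongrightarrow> energy B \<beta> x"
proof -
  have bounded_part: "(\<lambda>n. energy B (\<beta>s n) (Xs n)) \<longlonglongrightarrow> energy B \<beta> x"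
    unfolding energy_def interaction_def using assms(2-4) by (intro tendsto_intros) auto
  have "(\<lambda>n. gauss_kernel \<sigma> (Xs n p) (Xs n q)) \<longlonglongrightarrow> 0" if "p \<in> B" "q \<in> S - B" for p q
    using filterlim_norm_diff_at_top[OF assms(5)[OF that(2)] assms(4)[OF that(1)]]
    by (subst gauss_kernel_commute) (rule gauss_kernel_tendsto_0[OF sigma_pos])
  then have cross_part: "(\<lambda>n. \<Sum>p\<in>B. \<Sum>q\<in>S - B. \<beta>s n p * \<beta>s n q * gauss_kernel \<sigma> (Xs n p) (Xs n q))
      \<longlonglongrightarrow> (\<Sum>p\<in>B. \<Sum>q\<in>S - B. \<beta> p * \<beta> q * 0)"
    using assms(2,3) by (intro tendsto_sum tendsto_mult) auto
  have potential_part: "(\<lambda>n. \<Sum>q\<in>S - B. \<beta>s n q * potential (Xs n q)) \<longlonglongrightarrow> (\<Sum>q\<in>S - B. \<beta> q * 0)"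
    using assms(3,5) by (intro tendsto_sum tendsto_mult potential_tendsto_0) auto
  show ?thesis
    using tendsto_diff[OF tendsto_add[OF bounded_part tendsto_mult[OF tendsto_const[of 2] cross_part]]
        tendsto_mult[OF tendsto_const[of 2] potential_part]]
    by (simp add: energy_split[OF assms(1,2)] add_diff_eq)
qed

lemma energy_lower_bound:
  assumes "\<And>q. q \<in> S \<Longrightarrow> 0 \<le> \<beta> q" and "sum \<beta> S \<le> 1"
  shows "self_energy - 2 \<le> energy S \<beta> X"
proof -
  have "0 \<le> interaction S \<beta> X"
    unfolding interaction_def using assms(1) by (intro sum_nonneg) auto
  moreover have "(\<Sum>q\<in>S. \<beta> q * potential (X q)) \<le> sum \<beta> S"
    using assms(1) potential_le_1 by (intro sum_mono) (simp add: mult_left_le)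
  ultimately show ?thesis
    using assms(2) by (simp add: energy_def)
qed

lemma energy_insert:
  assumes "finite B" and "q \<notin> B"
  shows "energy (insert q B) \<beta> X = energy B \<beta> X + (\<beta> q)\<^sup>2
    + 2 * \<beta> q * ((\<Sum>p\<in>B. \<beta> p * gauss_kernel \<sigma> (X p) (X q)) - potential (X q))"
proof -
  have "insert q B - B = {q}"
    using assms(2) by auto
  then show ?thesis
    using energy_split[of "insert q B" B \<beta> X] assms(1)
    by (simp add: subset_insertI interaction_def power2_eq_square sum_distrib_left algebra_simps)
qed

lemma energy_tendsto_relaxation:
  assumes "finite S" and "B \<subseteq> S" and "\<And>n q. q \<in> B \<Longrightarrow> Xs n q = x q"
    and "\<And>q. q \<in> S - B \<Longrightarrow> filterlim (\<lambda>n. norm (Xs n q)) at_top sequentially"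
    and "\<And>p q. p \<in> S - B \<Longrightarrow> q \<in> S - B \<Longrightarrow> p \<noteq> q \<Longrightarrow>
      filterlim (\<lambda>n. norm (Xs n p - Xs n q)) at_top sequentially"
  shows "(\<lambda>n. energy S \<beta> (Xs n)) \<longlonglongrightarrow> energy B \<beta> x + (\<Sum>q\<in>S - B. (\<beta> q)\<^sup>2)"
proof -
  have "(\<lambda>n. energy S \<beta> (Xs n) - interaction (S - B) \<beta> (Xs n)) \<longlonglongrightarrow> energy B \<beta> x"
    using assms(1-4) by (intro energy_tendsto_escape) auto
  moreover have "(\<lambda>n. interaction (S - B) \<beta> (Xs n)) \<longlonglongrightarrow> (\<Sum>q\<in>S - B. (\<beta> q)\<^sup>2)"
    using assms(1,5) by (intro interaction_tendsto_sum_squares) auto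
  ultimately show ?thesis
    by (fastforce dest: tendsto_add)
qed

lemma energy_escape_relaxation_attained:
  assumes "finite S" and "B \<subseteq> S" and "\<And>q. q \<in> S \<Longrightarrow> 0 \<le> \<beta> q" and "sum \<beta> S \<le> 1"
  shows "\<exists>X. energy S \<beta> X \<le> energy B \<beta> x + (\<Sum>q\<in>S - B. (\<beta> q)\<^sup>2)"
proof (cases "\<forall>q\<in>S - B. \<beta> q = 0")
  case True
  then show ?thesis
    by (intro exI[of _ x]) (simp add: energy_split[OF assms(1,2)] interaction_def)
next
  case False
  then obtain q0 where q0: "q0 \<in> S" "q0 \<notin> B" "0 < \<beta> q0"
    using assms(3) by (auto simp: less_le)
  define B' where "B' = insert q0 B"
  have B': "B' \<subseteq> S" "finite B"
    using assms(1,2) q0(1) by (auto simp: B'_def intro: finite_subset)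
  have "(\<Sum>p\<in>B. \<beta> p) + \<beta> q0 = sum \<beta> B'"
    using B'(2) q0(2) by (simp add: B'_def)
  also have "\<dots> \<le> sum \<beta> S"
    using B'(1) assms(1,3) by (intro sum_mono2) auto
  finally have "(\<Sum>p\<in>B. \<beta> p) < 1"
    using assms(4) q0(3) by linarith
  then obtain y where y: "(\<Sum>p\<in>B. \<beta> p * gauss_kernel \<sigma> (x p) y) < potential y"
    using exists_kernel_combination_less_potential[OF B'(2)] assms(2,3) by blast
  obtain Z :: "nat \<Rightarrow> _ \<Rightarrow> 'a" where Z: "\<forall>p\<in>S - B'. filterlim (\<lambda>n. norm (Z n p)) at_top sequentially \<and>
      (\<forall>q\<in>S - B'. p \<noteq> q \<longrightarrow> filterlim (\<lambda>n. norm (Z n p - Z n q)) at_top sequentially)"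
    using exists_pairwise_norm_diff_at_top[of "S - B'"] assms(1) by blast
  define x' where "x' = x(q0 := y)"
  define Xs where "Xs n q = (if q \<in> B' then x' q else Z n q)" for n q
  define L where "L = energy B \<beta> x + (\<Sum>q\<in>S - B. (\<beta> q)\<^sup>2)"
  have "energy B' \<beta> x' + (\<Sum>q\<in>S - B'. (\<beta> q)\<^sup>2)
      = L + 2 * \<beta> q0 * ((\<Sum>p\<in>B. \<beta> p * gauss_kernel \<sigma> (x p) y) - potential y)"
  proof -
    have "energy B \<beta> x' = energy B \<beta> x" "\<And>p. p \<in> B \<Longrightarrow> x' p = x p"
      using q0(2) by (auto simp: x'_def intro: energy_cong)
    moreover have "S - B = insert q0 (S - B')" "q0 \<notin> S - B'"
      using q0 by (auto simp: B'_def)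
    ultimately show ?thesis
      using energy_insert[OF B'(2) q0(2), of \<beta> x'] assms(1)
      by (simp add: B'_def[symmetric] L_def x'_def)
  qed
  moreover have "(\<lambda>n. energy S \<beta> (Xs n)) \<longlonglongrightarrow> energy B' \<beta> x' + (\<Sum>q\<in>S - B'. (\<beta> q)\<^sup>2)"
    using assms(1) B'(1) Z by (intro energy_tendsto_relaxation) (auto simp: Xs_def)
  moreover have "2 * \<beta> q0 * ((\<Sum>p\<in>B. \<beta> p * gauss_kernel \<sigma> (x p) y) - potential y) < 0"
    using q0(3) y by (simp add: mult_pos_neg)
  ultimately have "\<forall>\<^sub>F n in sequentially. energy S \<beta> (Xs n) < L"
    by (intro order_tendstoD(2)) auto
  then obtain n where "energy S \<beta> (Xs n) < L"
    by (auto simp: eventually_sequentially)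
  then show ?thesis
    unfolding L_def by (intro exI[of _ "Xs n"]) simp
qed

lemma energy_le_limit:
  assumes "finite S"
    and "\<And>n q. q \<in> S \<Longrightarrow> 0 \<le> \<beta>s n q" and "\<And>q. q \<in> S \<Longrightarrow> (\<lambda>n. \<beta>s n q) \<longlonglongrightarrow> \<beta> q"
    and "\<And>q. q \<in> S \<Longrightarrow> 0 \<le> \<beta> q" and "sum \<beta> S \<le> 1"
    and "(\<lambda>n. energy S (\<beta>s n) (Xs n)) \<longlonglongrightarrow> m"
  shows "\<exists>X. energy S \<beta> X \<le> m"
proof -
  obtain r B x where r: "strict_mono r" "B \<subseteq> S" "\<forall>q\<in>B. (\<lambda>n. Xs (r n) q) \<longlonglongrightarrow> x q"
      "\<forall>q\<in>S - B. filterlim (\<lambda>n. norm (Xs (r n) q)) at_top sequentially"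
    using finite_family_subseq_tendsto_or_norm_at_top[OF assms(1), of Xs] by blast
  have \<beta>s_r: "(\<lambda>n. \<beta>s (r n) q) \<longlonglongrightarrow> \<beta> q" if "q \<in> S" for q
    using LIMSEQ_subseq_LIMSEQ[OF assms(3)[OF that] r(1)] by (simp add: o_def)
  define E where "E = S - B"
  let ?lower = "\<lambda>n. energy S (\<beta>s (r n)) (Xs (r n)) - interaction E (\<beta>s (r n)) (Xs (r n))
      + (\<Sum>q\<in>E. (\<beta>s (r n) q)\<^sup>2)"
  have "(\<lambda>n. energy S (\<beta>s (r n)) (Xs (r n)) - interaction E (\<beta>s (r n)) (Xs (r n))) \<longlonglongrightarrow> energy B \<beta> x"
    unfolding E_def using assms(1) r \<beta>s_r by (intro energy_tendsto_escape) auto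
  moreover have "(\<lambda>n. \<Sum>q\<in>E. (\<beta>s (r n) q)\<^sup>2) \<longlonglongrightarrow> (\<Sum>q\<in>E. (\<beta> q)\<^sup>2)"
    using \<beta>s_r by (intro tendsto_intros) (auto simp: E_def)
  ultimately have "?lower \<longlonglongrightarrow> energy B \<beta> x + (\<Sum>q\<in>E. (\<beta> q)\<^sup>2)"
    by (rule tendsto_add)
  moreover have "?lower n \<le> energy S (\<beta>s (r n)) (Xs (r n))" for n
    using sum_squares_le_interaction[of E "\<beta>s (r n)" "Xs (r n)"] assms(1,2) by (simp add: E_def)
  moreover have "(\<lambda>n. energy S (\<beta>s (r n)) (Xs (r n))) \<longlonglongrightarrow> m"
    using LIMSEQ_subseq_LIMSEQ[OF assms(6) r(1)] by (simp add: o_def)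
  ultimately have "energy B \<beta> x + (\<Sum>q\<in>E. (\<beta> q)\<^sup>2) \<le> m"
    by (intro LIMSEQ_le) auto
  moreover obtain X where "energy S \<beta> X \<le> energy B \<beta> x + (\<Sum>q\<in>E. (\<beta> q)\<^sup>2)"
    unfolding E_def using energy_escape_relaxation_attained assms(1,4,5) r(2) by blast
  ultimately show ?thesis
    by (blast intro: order.trans)
qed

lemma energy_min_attained:
  assumes "A \<subseteq> prob_simplex Q" and "A \<noteq> {}"
    and "\<And>\<beta>s :: nat \<Rightarrow> nat \<Rightarrow> real. (\<And>n. \<beta>s n \<in> A) \<Longrightarrow>
      \<exists>r \<beta>. strict_mono r \<and> \<beta> \<in> A \<and> (\<forall>q<Q. (\<lambda>n. \<beta>s (r n) q) \<longlonglongrightarrow> \<beta> q)"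
  shows "\<exists>X. \<exists>\<beta>\<in>A. \<forall>Y. \<forall>\<gamma>\<in>A. energy {..<Q} \<beta> X \<le> energy {..<Q} \<gamma> Y"
proof -
  have simplex: "\<forall>q<Q. 0 \<le> \<gamma> q" "sum \<gamma> {..<Q} \<le> 1" if "\<gamma> \<in> A" for \<gamma>
    using assms(1) that by (auto simp: prob_simplex_def)
  define V where "V = {energy {..<Q} \<gamma> Y | \<gamma> Y. \<gamma> \<in> A}"
  have "V \<noteq> {}"
    using assms(2) by (auto simp: V_def)
  moreover have bdd: "bdd_below V"
    using simplex by (intro bdd_belowI[of _ "self_energy - 2"]) (auto simp: V_def intro!: energy_lower_bound)
  ultimately obtain v where v: "\<And>n. v n \<in> V" "v \<longlonglongrightarrow> Inf V"
    using closure_contains_Inf closure_sequential by metis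
  have "\<forall>n. \<exists>\<gamma> Y. \<gamma> \<in> A \<and> v n = energy {..<Q} \<gamma> Y"
    using v(1) unfolding V_def by blast
  then obtain \<beta>s Xs where "\<And>n. \<beta>s n \<in> A" "v = (\<lambda>n. energy {..<Q} (\<beta>s n) (Xs n))"
    by (metis ext)
  with v(2) have seq: "\<And>n. \<beta>s n \<in> A" "(\<lambda>n. energy {..<Q} (\<beta>s n) (Xs n)) \<longlonglongrightarrow> Inf V"
    by auto
  obtain r \<beta> where r: "strict_mono r" "\<beta> \<in> A" "\<forall>q<Q. (\<lambda>n. \<beta>s (r n) q) \<longlonglongrightarrow> \<beta> q"
    using assms(3)[of \<beta>s] seq(1) by blast
  have "\<exists>X. energy {..<Q} \<beta> X \<le> Inf V"
    using LIMSEQ_subseq_LIMSEQ[OF seq(2) r(1)] r(2,3) simplex seq(1)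
    by (intro energy_le_limit[of "{..<Q}" "\<lambda>n. \<beta>s (r n)" \<beta> "\<lambda>n. Xs (r n)"]) (auto simp: o_def)
  then obtain X where "energy {..<Q} \<beta> X \<le> Inf V" ..
  moreover have "Inf V \<le> energy {..<Q} \<gamma> Y" if "\<gamma> \<in> A" for \<gamma> Y
    using bdd that by (intro cInf_lower) (auto simp: V_def)
  ultimately show ?thesis
    using r(2) by (meson order.trans)
qed

end

theorem proposition3:
  fixes \<sigma> :: real and \<eta> :: "'a::euclidean_space measure" and Q :: nat
  assumes "\<sigma> > 0" and "prob_space \<eta>" and "sets \<eta> = sets borel" and "Q \<ge> 1"
  shows "(\<forall>\<alpha>\<in>prob_simplex Q. \<exists>X. \<forall>Y.
            gdist2 \<sigma> (dirac_comb Q \<alpha> X) \<eta> \<le> gdist2 \<sigma> (dirac_comb Q \<alpha> Y) \<eta>)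
       \<and> (\<exists>X. \<exists>\<alpha>\<in>prob_simplex Q. \<forall>Y. \<forall>\<beta>\<in>prob_simplex Q.
            gdist2 \<sigma> (dirac_comb Q \<alpha> X) \<eta> \<le> gdist2 \<sigma> (dirac_comb Q \<beta> Y) \<eta>)"
proof -
  interpret gauss_mmd \<sigma> \<eta>
    using assms(1-3) by (rule gauss_mmd.intro)
  have gdist2_eq: "gdist2 \<sigma> (dirac_comb Q \<beta> X) \<eta> = energy {..<Q} \<beta> X"
    if "\<beta> \<in> prob_simplex Q" for \<beta> X
    using that by (intro gdist2_dirac_comb_eq_energy) (simp add: prob_simplex_def)
  have "\<exists>X. \<exists>\<beta>\<in>{\<alpha>}. \<forall>Y. \<forall>\<gamma>\<in>{\<alpha>}. energy {..<Q} \<beta> X \<le> energy {..<Q} \<gamma> Y"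
    if "\<alpha> \<in> prob_simplex Q" for \<alpha>
    using that by (intro energy_min_attained) (auto intro: strict_mono_id)
  moreover have "(\<lambda>q. if q = 0 then 1 else 0) \<in> prob_simplex Q"
    using assms(4) by (simp add: prob_simplex_def)
  then have "\<exists>X. \<exists>\<beta>\<in>prob_simplex Q. \<forall>Y. \<forall>\<gamma>\<in>prob_simplex Q.
      energy {..<Q} \<beta> X \<le> energy {..<Q} \<gamma> Y"
    by (intro energy_min_attained prob_simplex_subseq_tendsto) auto
  ultimately show ?thesis
    by (simp add: gdist2_eq)
qed

end
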